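(* Let $M$ be a positive integer with $M\not\equiv0\bmod3$, $L$ a positive divisor of $M$ with $L^*>2$, and $\ell$ the number of prime divisors of $L$. Then $J_1(L,M)=\varphi(L^* )\big(M^2/L^*+(-1)^\ell(8-9\epsilon)\big)/24$, where $\epsilon=1$ if $M$ is odd, $\epsilon=2$ if $M\equiv2\bmod4$ and $L^*$ is even, and $\epsilon=0$ otherwise.
   Context: For a positive integer $n$, $n^*$ denotes the product of the distinct prime divisors of $n$, and $\varphi$ is Euler's totient function. For a positive integer $M$, a positive divisor $L$ of $M$ and an integer $k\ge0$, $J_k(L,M)=\sum_u u^k$, the sum over integers $u$ with $0<u<M/2$, $\gcd(u,L)=1$ and $u\equiv -M\bmod 3$. *)

theory Defs
  imports "HOL-Number_Theory.Number_Theory"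
begin

definition radical :: "nat \<Rightarrow> nat" where
  "radical n = (\<Prod>p\<in>prime_factors n. p)"

definition J :: "nat \<Rightarrow> nat \<Rightarrow> nat \<Rightarrow> nat" where
  "J k L M = (\<Sum>u\<in>{u::nat. 0 < u \<and> 2 * u < M \<and> coprime u L \<and> [int u = - int M] (mod 3)}. u ^ k)"

end

theory Submission
  imports Defs
begin

text \<open>
  For a prime \<open>p\<close> dividing \<open>M\<close> but not \<open>Q\<close>, the \<open>u\<close> counted by \<open>J\<^sub>k(Q,M)\<close> split into those
  prime to \<open>p\<close>, counted by \<open>J\<^sub>k(pQ,M)\<close>, and the multiples \<open>u = pt\<close>; as \<open>3 \<nmid> M\<close> forces \<open>p \<noteq> 3\<close>,
  the condition \<open>u \<equiv> -M (mod 3)\<close> becomes \<open>t \<equiv> -M/p (mod 3)\<close>, so the multiples contribute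
  \<open>p\<^sup>k J\<^sub>k(Q,M/p)\<close>. Starting from \<open>J\<^sub>1(1,M)\<close>, a sum over an arithmetic progression, and adjoining
  the prime factors of \<open>L\<close> one at a time gives \<open>24 J\<^sub>1(L,M) = \<phi>(L\<^sup>*)/L\<^sup>* M\<^sup>2 + E\<close> with an error
  term \<open>E\<close> obeying the same recursion; for \<open>L\<^sup>* > 2\<close> it equals \<open>(-1)\<^sup>\<ell> \<phi>(L\<^sup>*) (8 - 9\<epsilon>)\<close>.
\<close>

lemma coprime_iff_no_common_prime_factor:
  fixes u n :: nat
  assumes "n \<noteq> 0"
  shows "coprime u n \<longleftrightarrow> (\<forall>p\<in>prime_factors n. \<not> p dvd u)"
proof
  assume "coprime u n"
  then show "\<forall>p\<in>prime_factors n. \<not> p dvd u"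
    by (metis coprime_common_divisor in_prime_factors_iff not_prime_unit)
next
  assume no_common: "\<forall>p\<in>prime_factors n. \<not> p dvd u"
  show "coprime u n"
  proof (rule ccontr)
    assume "\<not> coprime u n"
    then obtain p where "prime p" "p dvd gcd u n"
      using prime_factor_nat coprime_iff_gcd_eq_1 by blast
    then show False
      using no_common assms by (auto simp: in_prime_factors_iff intro: dvd_trans)
  qed
qed

lemma prime_factors_radical:
  assumes "n \<noteq> 0"
  shows "prime_factors (radical n) = prime_factors n"
proof -
  have "prime_factors (radical n) = (\<Union>p\<in>prime_factors n. prime_factors p)"
    unfolding radical_def by (subst prime_factors_prod) (auto simp: in_prime_factors_iff)
  also have "\<dots> = prime_factors n"
    by (auto simp: in_prime_factors_iff prime_factorization_prime)
  finally show ?thesis .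
qed

lemma radical_nonzero: "radical n \<noteq> 0"
  unfolding radical_def by (auto simp: in_prime_factors_iff)

lemma coprime_radical_right_iff:
  assumes "n \<noteq> 0"
  shows "coprime u (radical n) \<longleftrightarrow> coprime u n"
  using assms radical_nonzero
  by (simp add: coprime_iff_no_common_prime_factor prime_factors_radical)

lemma J_radical:
  assumes "L \<noteq> 0"
  shows "J k (radical L) M = J k L M"
  unfolding J_def using coprime_radical_right_iff[OF assms] by simp

lemma J_split_prime:
  fixes p Q M :: nat
  assumes p: "prime p" and "coprime p Q" and "p dvd M" and "\<not> 3 dvd M"
  shows "J k Q M = J k (p * Q) M + p ^ k * J k Q (M div p)"
proof -
  obtain m where M: "M = p * m"
    using \<open>p dvd M\<close> by blast
  have "p > 0"
    using p prime_gt_0_nat by blast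
  have "coprime 3 p"
    using \<open>\<not> 3 dvd M\<close> M prime_imp_coprime[of 3 p] dvd_mult2 by auto
  then have "coprime (int p) 3"
    by (metis coprime_commute coprime_int_iff of_nat_numeral)
  then have cong_cancel: "[int (p * t) = - int M] (mod 3) \<longleftrightarrow> [int t = - int m] (mod 3)" for t
    using cong_mult_lcancel[of "int p" 3 "int t" "- int m"] by (simp add: M)
  define A where "A = {u. 0 < u \<and> 2 * u < M \<and> coprime u Q \<and> [int u = - int M] (mod 3)}"
  define A' where "A' = {u. 0 < u \<and> 2 * u < m \<and> coprime u Q \<and> [int u = - int m] (mod 3)}"
  have "finite A"
    unfolding A_def by (rule finite_subset[of _ "{..<M}"]) auto
  have split: "A = {u \<in> A. coprime u (p * Q)} \<union> {u \<in> A. p dvd u}"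
    using p prime_imp_coprime coprime_commute unfolding A_def by auto
  have image: "{u \<in> A. p dvd u} = (\<lambda>t. p * t) ` A'"
  proof (intro equalityI subsetI)
    fix u assume "u \<in> {u \<in> A. p dvd u}"
    then obtain t where "u = p * t" "p * t \<in> A"
      by blast
    then show "u \<in> (\<lambda>t. p * t) ` A'"
      using \<open>p > 0\<close> cong_cancel unfolding A_def A'_def M by auto
  next
    fix u assume "u \<in> (\<lambda>t. p * t) ` A'"
    then show "u \<in> {u \<in> A. p dvd u}"
      using \<open>p > 0\<close> cong_cancel \<open>coprime p Q\<close> unfolding A_def A'_def M by auto
  qed
  have "J k Q M = (\<Sum>u\<in>A. u ^ k)"
    unfolding J_def A_def ..
  also have "\<dots> = (\<Sum>u | u \<in> A \<and> coprime u (p * Q). u ^ k) + (\<Sum>u | u \<in> A \<and> p dvd u. u ^ k)"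
    using \<open>finite A\<close> p by (subst split, intro sum.union_disjoint) (auto simp: prime_imp_coprime)
  also have "(\<Sum>u | u \<in> A \<and> coprime u (p * Q). u ^ k) = J k (p * Q) M"
    unfolding J_def A_def by (intro sum.cong) auto
  also have "(\<Sum>u | u \<in> A \<and> p dvd u. u ^ k) = (\<Sum>t\<in>A'. (p * t) ^ k)"
    using image \<open>p > 0\<close> by (simp add: sum.reindex inj_on_def)
  also have "\<dots> = p ^ k * J k Q (M div p)"
    unfolding J_def A'_def M using \<open>p > 0\<close> by (simp add: power_mult_distrib sum_distrib_left)
  finally show ?thesis .
qed

lemma sum_arith_progression_3:
  "2 * (\<Sum>t<k. 3 * t + a) + 3 * k = 3 * k * k + 2 * a * (k :: nat)"
  by (induction k) (auto simp: algebra_simps)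

lemma J_1_1_progression:
  assumes "\<And>u. 0 < u \<and> 2 * u < M \<and> (u + M) mod 3 = 0 \<longleftrightarrow> (\<exists>t<k. u = 3 * t + a)"
  shows "2 * real (J 1 1 M) = 3 * real k ^ 2 + (2 * real a - 3) * real k"
proof -
  have "[int u = - int M] (mod 3) \<longleftrightarrow> (u + M) mod 3 = 0" for u
    unfolding cong_def by presburger
  then have "{u. 0 < u \<and> 2 * u < M \<and> coprime u 1 \<and> [int u = - int M] (mod 3)}
      = (\<lambda>t. 3 * t + a) ` {..<k}"
    using assms by auto
  then have "J 1 1 M = (\<Sum>t<k. 3 * t + a)"
    unfolding J_def by (simp add: sum.reindex inj_on_def)
  then have "2 * J 1 1 M + 3 * k = 3 * k * k + 2 * a * k"
    using sum_arith_progression_3 by simp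
  then have "2 * real (J 1 1 M) + 3 * real k = 3 * real k * real k + 2 * real a * real k"
    by (metis (mono_tags) of_nat_add of_nat_mult of_nat_numeral)
  then show ?thesis
    by (simp add: algebra_simps power2_eq_square)
qed

lemma J_1_1:
  assumes "\<not> 3 dvd M"
  shows "24 * real (J 1 1 M) = real M ^ 2 + (if odd M then -1 else 8 - 6 * real M)"
proof -
  define q where "q = M div 6"
  have "M = 6 * q + 1 \<or> M = 6 * q + 2 \<or> M = 6 * q + 4 \<or> M = 6 * q + 5"
    using assms unfolding q_def by presburger
  then consider "M = 6 * q + 1" | "M = 6 * q + 2" | "M = 6 * q + 4" | "M = 6 * q + 5"
    by blast
  then show ?thesis
  proof cases
    case 1
    have "2 * real (J 1 1 M) = 3 * real q ^ 2 + (2 * real (2::nat) - 3) * real q"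
      by (rule J_1_1_progression) (simp add: 1, presburger)
    then show ?thesis by (simp add: 1 algebra_simps power2_eq_square)
  next
    case 2
    have "2 * real (J 1 1 M) = 3 * real q ^ 2 + (2 * real (1::nat) - 3) * real q"
      by (rule J_1_1_progression) (simp add: 2, presburger)
    then show ?thesis by (simp add: 2 algebra_simps power2_eq_square)
  next
    case 3
    have "2 * real (J 1 1 M) = 3 * real q ^ 2 + (2 * real (2::nat) - 3) * real q"
      by (rule J_1_1_progression) (simp add: 3, presburger)
    then show ?thesis by (simp add: 3 algebra_simps power2_eq_square)
  next
    case 4
    have "2 * real (J 1 1 M) = 3 * real (q + 1) ^ 2 + (2 * real (1::nat) - 3) * real (q + 1)"
      by (rule J_1_1_progression) (simp add: 4, presburger)
    then show ?thesis by (simp add: 4 algebra_simps power2_eq_square)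
  qed
qed

definition totient_density :: "nat set \<Rightarrow> real" where
  "totient_density P = (\<Prod>p\<in>P. 1 - 1 / real p)"

definition signed_totient :: "nat set \<Rightarrow> real" where
  "signed_totient P = (\<Prod>p\<in>P. 1 - real p)"

text \<open>The \<open>\<epsilon>\<close> of the theorem, with \<open>2 \<in> P\<close> standing for \<open>L\<^sup>*\<close> being even.\<close>

definition parity_eps :: "nat set \<Rightarrow> nat \<Rightarrow> real" where
  "parity_eps P M = (if odd M then 1 else if M mod 4 = 2 \<and> 2 \<in> P then 2 else 0)"

definition error_term :: "nat set \<Rightarrow> nat \<Rightarrow> real" where
  "error_term P M = signed_totient P * (8 - 9 * parity_eps P M)
     - (if P = {} \<and> even M \<or> P = {2} \<and> M mod 4 = 2 then 6 * real M else 0)"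

lemma error_term_insert_prime:
  assumes p: "prime p" and "p \<notin> P" and "finite P" and M: "M = p * m"
  shows "error_term (insert p P) M = error_term P M - real p * error_term P m"
proof (cases "p = 2")
  case True
  have "signed_totient (insert p P) = - signed_totient P"
    using \<open>p \<notin> P\<close> \<open>finite P\<close> True unfolding signed_totient_def by simp
  moreover have "M mod 4 = 2 \<longleftrightarrow> odd m"
    using M True by presburger
  ultimately show ?thesis
    using \<open>p \<notin> P\<close> True unfolding error_term_def parity_eps_def M
    by (auto simp: algebra_simps)
next
  case False
  then have "odd p"
    using p prime_odd_nat prime_ge_2_nat[OF p] by force
  have "signed_totient (insert p P) = (1 - real p) * signed_totient P"
    using \<open>p \<notin> P\<close> \<open>finite P\<close> unfolding signed_totient_def by simp
  moreover have "odd M \<longleftrightarrow> odd m"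
    using \<open>odd p\<close> M by simp
  moreover have "M mod 4 = 2 \<longleftrightarrow> m mod 4 = 2"
  proof (cases "even m")
    case True
    obtain n j where "m = 2 * n" "p = 2 * j + 1"
      using True \<open>odd p\<close> by (metis evenE oddE)
    then have "M = 4 * (j * n) + m"
      using M by (simp add: algebra_simps)
    then show ?thesis
      by presburger
  next
    case False
    then show ?thesis
      using \<open>odd M \<longleftrightarrow> odd m\<close> by presburger
  qed
  ultimately show ?thesis
    using False unfolding error_term_def parity_eps_def M
    by (auto simp: algebra_simps)
qed

lemma J_1_prod_primes:
  assumes "finite P" and "\<forall>p\<in>P. prime p" and "\<forall>p\<in>P. p dvd M" and "\<not> 3 dvd M"
  shows "24 * real (J 1 (\<Prod>P) M) = totient_density P * real M ^ 2 + error_term P M"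
  using assms
proof (induction P arbitrary: M rule: finite_induct)
  case empty
  then show ?case
    using J_1_1 by (simp add: totient_density_def error_term_def signed_totient_def parity_eps_def)
next
  case (insert p P)
  have p: "prime p" and "p dvd M"
    using insert.prems by auto
  then obtain m where M: "M = p * m"
    by blast
  have "p > 0"
    using p prime_gt_0_nat by blast
  have "\<not> 3 dvd m"
    using insert.prems(3) M by auto
  have "q dvd m" if "q \<in> P" for q
  proof -
    have "prime q" "q \<noteq> p" "q dvd p * m"
      using that insert M by auto
    then show ?thesis
      using p by (metis prime_dvd_mult_iff primes_dvd_imp_eq)
  qed
  then have IH_m: "24 * real (J 1 (\<Prod>P) m) = totient_density P * real m ^ 2 + error_term P m"
    using insert.IH insert.prems \<open>\<not> 3 dvd m\<close> by simp
  have IH_M: "24 * real (J 1 (\<Prod>P) M) = totient_density P * real M ^ 2 + error_term P M"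
    using insert.IH insert.prems by simp
  have "coprime p (\<Prod>P)"
    using insert.hyps insert.prems by (intro prod_coprime_right) (metis insert_iff primes_coprime)
  then have "J 1 (\<Prod>P) M = J 1 (p * \<Prod>P) M + p * J 1 (\<Prod>P) m"
    using J_split_prime[OF p _ \<open>p dvd M\<close> insert.prems(3), of "\<Prod>P" 1] M \<open>p > 0\<close> by simp
  then have "24 * real (J 1 (\<Prod>(insert p P)) M)
      = 24 * real (J 1 (\<Prod>P) M) - real p * (24 * real (J 1 (\<Prod>P) m))"
    using insert.hyps by (simp add: algebra_simps)
  also have "\<dots> = totient_density P * real M ^ 2 + error_term P M
      - real p * (totient_density P * real m ^ 2 + error_term P m)"
    unfolding IH_m IH_M ..
  also have "\<dots> = (1 - 1 / real p) * totient_density P * real M ^ 2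
      + (error_term P M - real p * error_term P m)"
    using \<open>p > 0\<close> unfolding M by (simp add: field_simps power2_eq_square)
  also have "\<dots> = totient_density (insert p P) * real M ^ 2 + error_term (insert p P) M"
    using insert.hyps error_term_insert_prime[OF p _ _ M] unfolding totient_density_def by simp
  finally show ?case .
qed

lemma totient_radical_eq_density:
  assumes "n \<noteq> 0"
  shows "real (totient (radical n)) = real (radical n) * totient_density (prime_factors n)"
  using totient_formula2[of "radical n"] prime_factors_radical[OF assms]
  unfolding totient_density_def by simp

lemma signed_totient_prime_factors:
  assumes "n \<noteq> 0"
  shows "signed_totient (prime_factors n) = (-1) ^ card (prime_factors n) * real (totient (radical n))"
proof -
  have "real (radical n) = (\<Prod>p\<in>prime_factors n. real p)"
    unfolding radical_def by simp
  then have "real (totient (radical n)) = (\<Prod>p\<in>prime_factors n. real p * (1 - 1 / real p))"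
    unfolding totient_radical_eq_density[OF assms] totient_density_def by (simp add: prod.distrib)
  also have "\<dots> = (\<Prod>p\<in>prime_factors n. real p - 1)"
    by (intro prod.cong) (auto simp: field_simps in_prime_factors_iff prime_gt_0_nat)
  finally have totient: "real (totient (radical n)) = (\<Prod>p\<in>prime_factors n. real p - 1)" .
  have "signed_totient (prime_factors n) = (\<Prod>p\<in>prime_factors n. (-1) * (real p - 1))"
    unfolding signed_totient_def by simp
  also have "\<dots> = (-1) ^ card (prime_factors n) * (\<Prod>p\<in>prime_factors n. real p - 1)"
    by (simp only: prod.distrib prod_constant)
  finally show ?thesis
    unfolding totient .
qed

lemma even_radical_iff:
  assumes "n \<noteq> 0"
  shows "even (radical n) \<longleftrightarrow> 2 \<in> prime_factors n"
  using assms prime_factors_radical[OF assms] radical_nonzero[of n]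
  by (auto simp: in_prime_factors_iff)

theorem propositionA3:
  fixes M L :: nat and \<epsilon> :: real
  assumes "M > 0" and "\<not> 3 dvd M" and "L > 0" and "L dvd M" and "radical L > 2"
    and "\<epsilon> = (if odd M then 1
               else if M mod 4 = 2 \<and> even (radical L) then 2 else 0)"
  shows "real (J 1 L M) =
    real (totient (radical L)) *
      (real M ^ 2 / real (radical L) + (-1) ^ card (prime_factors L) * (8 - 9 * \<epsilon>)) / 24"
proof -
  define P where "P = prime_factors L"
  have "radical L = \<Prod>P"
    unfolding P_def radical_def by simp
  then have "P \<noteq> {}" "P \<noteq> {2}"
    using assms(5) by auto
  have "real (totient (radical L)) *
      (real M ^ 2 / real (radical L) + (-1) ^ card (prime_factors L) * (8 - 9 * \<epsilon>))
    = totient_density P * real M ^ 2 + signed_totient P * (8 - 9 * \<epsilon>)"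
    using totient_radical_eq_density[of L] signed_totient_prime_factors[of L]
      radical_nonzero[of L] assms(3)
    unfolding P_def by (simp add: field_simps)
  also have "signed_totient P * (8 - 9 * \<epsilon>) = error_term P M"
    using \<open>P \<noteq> {}\<close> \<open>P \<noteq> {2}\<close> even_radical_iff[of L] assms(3,6) unfolding error_term_def parity_eps_def P_def by auto
  also have "totient_density P * real M ^ 2 + error_term P M = 24 * real (J 1 L M)"
    using J_1_prod_primes[of P M] J_radical[of L 1 M] \<open>radical L = \<Prod>P\<close> assms(2-4)
    unfolding P_def by (auto simp: in_prime_factors_iff intro: dvd_trans)
  finally show ?thesis
    by simp
qed

end
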